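(* Let $A,B$ be nonempty persistence diagrams, $\Theta(c)=d_\infty(cA,B)$ for $c\ge0$, let $b^{(m)}\in\chi(B)$ and $a^{(m)}\in\chi(A)$ be points with largest $y$-coordinate within $\chi(B)$ and $\chi(A)$ respectively, and set $$c_B=\min\Big\{\frac{b^{(m)}_y+b^{(m)}_x}{2\,\mathrm{bd}(A)},\frac{\mathrm{pers}(B)}{\mathrm{pers}(A)}\Big\},\qquad c_A=\max\Big\{\frac{2\,\mathrm{bd}(B)}{a^{(m)}_x+a^{(m)}_y},\frac{\mathrm{pers}(B)}{\mathrm{pers}(A)}\Big\}.$$ Then $c_B\le c_A$; $\Theta(c)=\mathrm{pers}(B)$ for all $0\le c\le c_B$; $\Theta(c)=c\cdot\mathrm{pers}(A)$ for all $c\ge c_A$; and the minimum value $\overline{d_D}(A,B)$ of $\Theta$ on $[0,\infty)$ is attained at some $c\in[c_B,c_A]$.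
   Context: A persistence diagram is a finite multiset of points $a=(a_x,a_y)$ with $0\le a_x<a_y<\infty$ together with the diagonal $\Delta$ of infinite multiplicity; nonempty means it has at least one such point. $d_\infty$ is the bottleneck distance. $cA=\{(ca_x,ca_y)\}$ for $c>0$, $0A$ is the empty diagram. $\overline{d_D}(A,B)=\inf_{c\ge0}d_\infty(cA,B)$. $\mathrm{pers}(a)=(a_y-a_x)/2$; $\mathrm{pers}(A)=\max_{a\in A}\mathrm{pers}(a)$; $\chi(A)$ is the multiset of points of $A$ with persistence equal to $\mathrm{pers}(A)$; $\mathrm{bd}(A)=\max_{a\in A}a_y$. *)

theory Defs
  imports "HOL-Analysis.Analysis" "HOL-Library.Multiset"
begin

type_synonym point = "real \<times> real"
type_synonym diagram = "point multiset"

text \<open>A persistence diagram: finite multiset of off-diagonal points (x,y) with 0 <= x < y;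
  the diagonal (infinite multiplicity) is implicit in the bottleneck distance.\<close>
definition is_diagram :: "diagram \<Rightarrow> bool" where
  "is_diagram A \<longleftrightarrow> (\<forall>a\<in>#A. 0 \<le> fst a \<and> fst a < snd a)"

definition pers_pt :: "point \<Rightarrow> real" where
  "pers_pt a = (snd a - fst a) / 2"

definition dinf_pt :: "point \<Rightarrow> point \<Rightarrow> real" where
  "dinf_pt a b = max \<bar>fst a - fst b\<bar> \<bar>snd a - snd b\<bar>"

definition Max0 :: "real set \<Rightarrow> real" where
  "Max0 S = (if S = {} then 0 else Max S)"

text \<open>Unmatched points are matched to the diagonal,
  at cost equal to their persistence (L-infinity distance to the diagonal).\<close>
definition is_matching :: "diagram \<Rightarrow> diagram \<Rightarrow> (point \<times> point) multiset \<Rightarrow> bool" where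
  "is_matching A B M \<longleftrightarrow> image_mset fst M \<subseteq># A \<and> image_mset snd M \<subseteq># B"

definition matching_cost :: "diagram \<Rightarrow> diagram \<Rightarrow> (point \<times> point) multiset \<Rightarrow> real" where
  "matching_cost A B M = max (Max0 ((\<lambda>(a,b). dinf_pt a b) ` set_mset M))
      (max (Max0 (pers_pt ` set_mset (A - image_mset fst M)))
           (Max0 (pers_pt ` set_mset (B - image_mset snd M))))"

definition bottleneck :: "diagram \<Rightarrow> diagram \<Rightarrow> real" where
  "bottleneck A B = Inf {matching_cost A B M | M. is_matching A B M}"

definition scale_diag :: "real \<Rightarrow> diagram \<Rightarrow> diagram" where
  "scale_diag c A = (if c = 0 then {#} else image_mset (\<lambda>(x,y). (c * x, c * y)) A)"

definition dbar :: "diagram \<Rightarrow> diagram \<Rightarrow> real" where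
  "dbar A B = Inf {bottleneck (scale_diag c A) B | c. c \<ge> 0}"

definition persD :: "diagram \<Rightarrow> real" where
  "persD A = Max (pers_pt ` set_mset A)"

definition chi :: "diagram \<Rightarrow> diagram" where
  "chi A = filter_mset (\<lambda>a. pers_pt a = persD A) A"

definition bd :: "diagram \<Rightarrow> real" where
  "bd A = Max (snd ` set_mset A)"

end

theory Submission
  imports Defs
begin

text \<open>Matching every point to the diagonal costs \<open>max (c pers(A)) pers(B)\<close>, which bounds
  \<open>\<Theta>(c)\<close> from above. Conversely, a point \<open>b \<in> \<chi>(B)\<close> is either unmatched, costing \<open>pers(B)\<close>, or
  matched to some \<open>c a\<close>; for \<open>c \<le> c\<^sub>B\<close> every point of \<open>cA\<close> has height at most \<open>(b\<^sub>x + b\<^sub>y)/2\<close>, so this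
  costs at least \<open>b\<^sub>y - (b\<^sub>x + b\<^sub>y)/2 = pers(B)\<close> too; symmetrically a point of \<open>c \<chi>(A)\<close> forces \<open>\<Theta>(c) \<ge> c pers(A)\<close> for \<open>c \<ge> c\<^sub>A\<close>. Hence
  \<open>\<Theta>\<close> is constant on \<open>[0, c\<^sub>B]\<close> and increasing on \<open>[c\<^sub>A, \<infinity>)\<close>. Moving every point of \<open>cA\<close> by at
  most \<open>|c' - c| bd(A)\<close> turns matchings for \<open>cA\<close> into matchings for \<open>c'A\<close>, so \<open>\<Theta>\<close> is
  Lipschitz on \<open>(0, \<infinity>)\<close> and attains its minimum on the compact interval \<open>[c\<^sub>B, c\<^sub>A]\<close>.\<close>

lemma Max0_nonneg: "finite S \<Longrightarrow> (\<And>x. x \<in> S \<Longrightarrow> 0 \<le> x) \<Longrightarrow> 0 \<le> Max0 S"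
  unfolding Max0_def by (auto intro: Max_ge_iff[THEN iffD2])

lemma Max0_upper: "finite S \<Longrightarrow> x \<in> S \<Longrightarrow> x \<le> Max0 S"
  unfolding Max0_def by auto

lemma Max0_least: "finite S \<Longrightarrow> 0 \<le> v \<Longrightarrow> (\<And>x. x \<in> S \<Longrightarrow> x \<le> v) \<Longrightarrow> Max0 S \<le> v"
  unfolding Max0_def by auto

lemma Max0_image_le_add:
  assumes "finite S" "0 \<le> d" "\<And>x. x \<in> S \<Longrightarrow> f' x \<le> f x + d"
  shows "Max0 (f' ` S) \<le> Max0 (f ` S) + d"
proof (cases "S = {}")
  case True
  then show ?thesis using assms by (simp add: Max0_def)
next
  case False
  have "Max (f' ` S) \<in> f' ` S" using Max_in[of "f' ` S"] assms(1) False by auto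
  then obtain x where x: "x \<in> S" "Max (f' ` S) = f' x" by auto
  have "f x \<le> Max (f ` S)" using x assms(1) by auto
  moreover have "f' x \<le> f x + d" using assms(3) x by auto
  ultimately show ?thesis using x False by (simp add: Max0_def)
qed

lemma dinf_pt_nonneg: "0 \<le> dinf_pt a b"
  unfolding dinf_pt_def by simp

lemma dinf_pt_commute: "dinf_pt a b = dinf_pt b a"
  unfolding dinf_pt_def by (simp add: abs_minus_commute)

lemma dinf_pt_triangle: "dinf_pt a c \<le> dinf_pt a b + dinf_pt b c"
  unfolding dinf_pt_def by (simp add: abs_if max_def)

lemma pers_pt_le_add_dinf_pt: "pers_pt q \<le> pers_pt p + dinf_pt p q"
proof -
  have "snd q - snd p \<le> dinf_pt p q" "fst p - fst q \<le> dinf_pt p q"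
    unfolding dinf_pt_def by auto
  then show ?thesis unfolding pers_pt_def by (simp add: field_simps)
qed

lemma is_matching_empty: "is_matching X B {#}"
  unfolding is_matching_def by simp

lemma matching_cost_nonneg: "0 \<le> matching_cost X B M"
proof -
  have "0 \<le> Max0 ((\<lambda>(a,b). dinf_pt a b) ` set_mset M)"
    by (rule Max0_nonneg) (auto simp: dinf_pt_nonneg)
  then show ?thesis unfolding matching_cost_def by simp
qed

lemma bottleneck_le_matching_cost:
  "is_matching X B M \<Longrightarrow> bottleneck X B \<le> matching_cost X B M"
  unfolding bottleneck_def
  by (rule cInf_lower) (auto intro: bdd_belowI[where m=0] simp: matching_cost_nonneg)

lemma bottleneck_greatest:
  "(\<And>M. is_matching X B M \<Longrightarrow> v \<le> matching_cost X B M) \<Longrightarrow> v \<le> bottleneck X B"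
  unfolding bottleneck_def by (rule cInf_greatest) (auto intro: is_matching_empty)

lemma bottleneck_le_pers_bound:
  assumes "0 \<le> v" "\<And>a. a \<in># X \<Longrightarrow> pers_pt a \<le> v" "\<And>b. b \<in># B \<Longrightarrow> pers_pt b \<le> v"
  shows "bottleneck X B \<le> v"
proof -
  have "Max0 (pers_pt ` set_mset X) \<le> v" "Max0 (pers_pt ` set_mset B) \<le> v"
    using assms by (auto intro!: Max0_least)
  then have "matching_cost X B {#} \<le> v"
    using assms(1) unfolding matching_cost_def by (simp add: Max0_def)
  then show ?thesis
    using bottleneck_le_matching_cost[OF is_matching_empty] by (rule order_trans[rotated])
qed

lemma mem_of_not_mem_diff: "x \<in># X \<Longrightarrow> x \<notin># X - Y \<Longrightarrow> x \<in># Y"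
  by (metis count_diff count_greater_zero_iff diff_zero not_gr_zero)

lemma bottleneck_ge_point_left:
  assumes "p \<in># X" "v \<le> pers_pt p" "\<And>b. b \<in># B \<Longrightarrow> v \<le> dinf_pt p b"
  shows "v \<le> bottleneck X B"
proof (rule bottleneck_greatest)
  fix M assume M: "is_matching X B M"
  show "v \<le> matching_cost X B M"
  proof (cases "p \<in># X - image_mset fst M")
    case True
    then have "pers_pt p \<le> Max0 (pers_pt ` set_mset (X - image_mset fst M))"
      by (intro Max0_upper) auto
    then show ?thesis using assms(2) unfolding matching_cost_def by linarith
  next
    case False
    then obtain b where pb: "(p, b) \<in># M"
      using mem_of_not_mem_diff[OF assms(1)] by force
    then have "b \<in># image_mset snd M" by force
    then have "b \<in># B" using M unfolding is_matching_def by (meson mset_subset_eqD)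
    moreover have "dinf_pt p b \<le> Max0 ((\<lambda>(a,b). dinf_pt a b) ` set_mset M)"
      using pb by (intro Max0_upper) force+
    ultimately show ?thesis using assms(3) unfolding matching_cost_def by fastforce
  qed
qed

lemma bottleneck_ge_point_right:
  assumes "q \<in># B" "v \<le> pers_pt q" "\<And>a. a \<in># X \<Longrightarrow> v \<le> dinf_pt a q"
  shows "v \<le> bottleneck X B"
proof (rule bottleneck_greatest)
  fix M assume M: "is_matching X B M"
  show "v \<le> matching_cost X B M"
  proof (cases "q \<in># B - image_mset snd M")
    case True
    then have "pers_pt q \<le> Max0 (pers_pt ` set_mset (B - image_mset snd M))"
      by (intro Max0_upper) auto
    then show ?thesis using assms(2) unfolding matching_cost_def by linarith
  next
    case False
    then obtain a where aq: "(a, q) \<in># M"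
      using mem_of_not_mem_diff[OF assms(1)] by force
    then have "a \<in># image_mset fst M" by force
    then have "a \<in># X" using M unfolding is_matching_def by (meson mset_subset_eqD)
    moreover have "dinf_pt a q \<le> Max0 ((\<lambda>(a,b). dinf_pt a b) ` set_mset M)"
      using aq by (intro Max0_upper) force+
    ultimately show ?thesis using assms(3) unfolding matching_cost_def by fastforce
  qed
qed

lemma bottleneck_image_le_add:
  assumes "0 \<le> d" "\<And>p. p \<in># X \<Longrightarrow> dinf_pt p (g p) \<le> d"
  shows "bottleneck (image_mset g X) B \<le> bottleneck X B + d"
proof -
  have "bottleneck (image_mset g X) B - d \<le> bottleneck X B"
  proof (rule bottleneck_greatest)
    fix M assume M: "is_matching X B M"
    define M' where "M' = image_mset (map_prod g id) M"
    have fst_M': "image_mset fst M' = image_mset g (image_mset fst M)"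
      and snd_M': "image_mset snd M' = image_mset snd M"
      unfolding M'_def by (simp_all add: image_mset.compositionality comp_def)
    have sub: "image_mset fst M \<subseteq># X" using M unfolding is_matching_def by simp
    have M': "is_matching (image_mset g X) B M'"
      using M unfolding is_matching_def fst_M' snd_M' by (simp add: image_mset_subseteq_mono)
    have unmatched: "image_mset g X - image_mset fst M' = image_mset g (X - image_mset fst M)"
      unfolding fst_M' using image_mset_Diff[OF sub, of g] by simp
    have matched_pairs: "(\<lambda>(a,b). dinf_pt a b) ` set_mset M' = (\<lambda>(a,b). dinf_pt (g a) b) ` set_mset M"
      unfolding M'_def by (force simp: image_image split: prod.splits)
    have "Max0 ((\<lambda>(a,b). dinf_pt a b) ` set_mset M')
        \<le> Max0 ((\<lambda>(a,b). dinf_pt a b) ` set_mset M) + d"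
      unfolding matched_pairs
    proof (rule Max0_image_le_add)
      fix x assume "x \<in> set_mset M"
      then have "fst x \<in># X" using mset_subset_eqD[OF sub] by simp
      then have "dinf_pt (g (fst x)) (snd x) \<le> dinf_pt (fst x) (snd x) + d"
        using assms(2)[of "fst x"] dinf_pt_triangle[of "g (fst x)" "snd x" "fst x"]
          dinf_pt_commute[of "fst x" "g (fst x)"] by linarith
      then show "(\<lambda>(a,b). dinf_pt (g a) b) x \<le> (\<lambda>(a,b). dinf_pt a b) x + d"
        by (simp add: case_prod_beta)
    qed (use assms(1) in simp_all)
    moreover have "Max0 (pers_pt ` set_mset (image_mset g X - image_mset fst M'))
        \<le> Max0 (pers_pt ` set_mset (X - image_mset fst M)) + d"
    proof -
      have "pers_pt (g p) \<le> pers_pt p + d" if "p \<in># X - image_mset fst M" for p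
        using assms(2)[OF in_diffD[OF that]] pers_pt_le_add_dinf_pt[of "g p" p] by linarith
      then show ?thesis
        unfolding unmatched set_image_mset image_image
        by (intro Max0_image_le_add) (use assms(1) in auto)
    qed
    ultimately have "matching_cost (image_mset g X) B M' \<le> matching_cost X B M + d"
      using assms(1) unfolding matching_cost_def snd_M' by linarith
    with bottleneck_le_matching_cost[OF M']
    show "bottleneck (image_mset g X) B - d \<le> matching_cost X B M" by simp
  qed
  then show ?thesis by simp
qed

lemma persD_upper: "a \<in># A \<Longrightarrow> pers_pt a \<le> persD A"
  unfolding persD_def by auto

lemma bd_upper: "a \<in># A \<Longrightarrow> snd a \<le> bd A"
  unfolding bd_def by auto

lemma mem_chiD: "a \<in># chi A \<Longrightarrow> a \<in># A \<and> pers_pt a = persD A"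
  unfolding chi_def by auto

lemma persD_pos: "is_diagram A \<Longrightarrow> A \<noteq> {#} \<Longrightarrow> 0 < persD A"
proof -
  assume A: "is_diagram A" "A \<noteq> {#}"
  then obtain a where a: "a \<in># A" by blast
  then have "0 < pers_pt a" using A(1) unfolding is_diagram_def pers_pt_def by auto
  then show ?thesis using persD_upper[OF a] by simp
qed

lemma bd_pos: "is_diagram A \<Longrightarrow> A \<noteq> {#} \<Longrightarrow> 0 < bd A"
proof -
  assume A: "is_diagram A" "A \<noteq> {#}"
  then obtain a where a: "a \<in># A" by blast
  then show ?thesis using A(1) bd_upper[OF a] unfolding is_diagram_def by fastforce
qed

lemma mem_scale_diagE:
  assumes "p \<in># scale_diag c A"
  obtains a where "a \<in># A" "p = (c * fst a, c * snd a)"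
  using assms unfolding scale_diag_def by (force split: if_splits)

lemma scale_diag_memI: "c \<noteq> 0 \<Longrightarrow> a \<in># A \<Longrightarrow> (c * fst a, c * snd a) \<in># scale_diag c A"
  unfolding scale_diag_def by (cases a) force

lemma pers_pt_scale: "pers_pt (c * fst a, c * snd a) = c * pers_pt a"
  unfolding pers_pt_def by (simp add: algebra_simps)

lemma scale_diag_rescale:
  "c \<noteq> 0 \<Longrightarrow> c' \<noteq> 0 \<Longrightarrow>
    scale_diag c' A = image_mset (\<lambda>p. (c' / c * fst p, c' / c * snd p)) (scale_diag c A)"
  unfolding scale_diag_def
  by (auto simp: image_mset.compositionality comp_def intro!: image_mset_cong split: prod.splits)

lemma bottleneck_scale_diag_le:
  assumes "is_diagram A" "is_diagram B" "A \<noteq> {#}" "B \<noteq> {#}" "0 \<le> c"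
  shows "bottleneck (scale_diag c A) B \<le> max (c * persD A) (persD B)"
proof (rule bottleneck_le_pers_bound)
  show "0 \<le> max (c * persD A) (persD B)"
    using persD_pos[OF assms(2,4)] by simp
  fix p assume "p \<in># scale_diag c A"
  then obtain a where "a \<in># A" "p = (c * fst a, c * snd a)" by (rule mem_scale_diagE)
  then show "pers_pt p \<le> max (c * persD A) (persD B)"
    using persD_upper assms(5) by (simp add: pers_pt_scale mult_left_mono max.coboundedI1)
qed (simp add: persD_upper max.coboundedI2)

lemma persD_le_bottleneck_scale_diag:
  assumes "bm \<in># chi B" "0 \<le> c" "c * bd A \<le> (fst bm + snd bm) / 2"
  shows "persD B \<le> bottleneck (scale_diag c A) B"
proof (rule bottleneck_ge_point_right)
  show "bm \<in># B" "persD B \<le> pers_pt bm" using mem_chiD[OF assms(1)] by simp_all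
  fix p assume "p \<in># scale_diag c A"
  then obtain a where a: "a \<in># A" "p = (c * fst a, c * snd a)" by (rule mem_scale_diagE)
  have "c * snd a \<le> c * bd A" using bd_upper[OF a(1)] assms(2) by (rule mult_left_mono)
  then have "persD B \<le> snd bm - snd p"
    using assms(3) mem_chiD[OF assms(1)] a(2) unfolding pers_pt_def by simp
  also have "\<dots> \<le> dinf_pt p bm" unfolding dinf_pt_def by linarith
  finally show "persD B \<le> dinf_pt p bm" .
qed

lemma scaled_persD_le_bottleneck_scale_diag:
  assumes "am \<in># chi A" "0 < c" "bd B \<le> c * (fst am + snd am) / 2"
  shows "c * persD A \<le> bottleneck (scale_diag c A) B"
proof (rule bottleneck_ge_point_left)
  have am: "am \<in># A" "pers_pt am = persD A" using mem_chiD[OF assms(1)] by simp_all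
  show "(c * fst am, c * snd am) \<in># scale_diag c A"
    using scale_diag_memI[OF _ am(1)] assms(2) by simp
  show "c * persD A \<le> pers_pt (c * fst am, c * snd am)" using am(2) by (simp add: pers_pt_scale)
  fix b assume "b \<in># B"
  moreover have "c * persD A = c * snd am - c * (fst am + snd am) / 2"
    unfolding am(2)[symmetric] pers_pt_def by (simp add: field_simps)
  ultimately have "c * persD A \<le> c * snd am - snd b"
    using bd_upper[of b B] assms(3) by linarith
  also have "\<dots> \<le> dinf_pt (c * fst am, c * snd am) b" unfolding dinf_pt_def by auto
  finally show "c * persD A \<le> dinf_pt (c * fst am, c * snd am) b" .
qed

lemma bottleneck_scale_diag_lipschitz:
  assumes "is_diagram A" "A \<noteq> {#}" "0 < c" "0 < c'"
  shows "bottleneck (scale_diag c' A) B \<le> bottleneck (scale_diag c A) B + \<bar>c' - c\<bar> * bd A"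
  unfolding scale_diag_rescale[of c c' A, OF order.strict_implies_not_eq[OF assms(3), symmetric]
      order.strict_implies_not_eq[OF assms(4), symmetric]]
proof (rule bottleneck_image_le_add)
  show "0 \<le> \<bar>c' - c\<bar> * bd A" using bd_pos[OF assms(1,2)] by simp
  fix p assume "p \<in># scale_diag c A"
  then obtain a where a: "a \<in># A" "p = (c * fst a, c * snd a)" by (rule mem_scale_diagE)
  have a0: "0 \<le> fst a" "fst a < snd a" "snd a \<le> bd A"
    using a(1) assms(1) bd_upper[OF a(1)] unfolding is_diagram_def by auto
  have "\<bar>c' - c\<bar> * fst a \<le> \<bar>c' - c\<bar> * snd a" using a0 by (intro mult_left_mono) auto
  then have "dinf_pt p (c' / c * fst p, c' / c * snd p) = \<bar>c' - c\<bar> * snd a"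
    using a(2) a0(1,2) assms(3)
    by (simp add: dinf_pt_def abs_mult left_diff_distrib[symmetric] abs_minus_commute)
  also have "\<dots> \<le> \<bar>c' - c\<bar> * bd A" using a0 by (intro mult_left_mono) auto
  finally show "dinf_pt p (c' / c * fst p, c' / c * snd p) \<le> \<bar>c' - c\<bar> * bd A" .
qed

lemma continuous_on_bottleneck_scale_diag:
  assumes "is_diagram A" "A \<noteq> {#}"
  shows "continuous_on {0<..} (\<lambda>c. bottleneck (scale_diag c A) B)"
proof (rule lipschitz_on_continuous_on)
  show "(bd A)-lipschitz_on {0<..} (\<lambda>c. bottleneck (scale_diag c A) B)"
  proof (rule lipschitz_onI)
    fix x y :: real assume "x \<in> {0<..}" "y \<in> {0<..}"
    then show "dist (bottleneck (scale_diag x A) B) (bottleneck (scale_diag y A) B) \<le> bd A * dist x y"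
      using bottleneck_scale_diag_lipschitz[OF assms, of x y B]
        bottleneck_scale_diag_lipschitz[OF assms, of y x B]
      by (simp add: dist_real_def abs_le_iff abs_minus_commute mult.commute)
  qed (use bd_pos[OF assms] in simp)
qed

lemma continuous_attains_inf_on_halfline:
  fixes f :: "real \<Rightarrow> real"
  assumes "0 \<le> a" "a \<le> b" "continuous_on {a..b} f"
    and "\<And>c. 0 \<le> c \<Longrightarrow> c \<le> a \<Longrightarrow> f a \<le> f c" and "\<And>c. b \<le> c \<Longrightarrow> f b \<le> f c"
  obtains c where "c \<in> {a..b}" "\<And>c'. 0 \<le> c' \<Longrightarrow> f c \<le> f c'"
proof -
  obtain c where c: "c \<in> {a..b}" "\<And>y. y \<in> {a..b} \<Longrightarrow> f c \<le> f y"
    using continuous_attains_inf[of "{a..b}" f] assms(2,3) by auto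
  have "f c \<le> f c'" if "0 \<le> c'" for c'
  proof -
    consider "c' \<le> a" | "c' \<in> {a..b}" | "b \<le> c'" by fastforce
    then show ?thesis
    proof cases
      case 1
      then show ?thesis using c(2)[of a] assms(2,4) that by fastforce
    next
      case 2
      then show ?thesis by (rule c(2))
    next
      case 3
      then show ?thesis using c(2)[of b] assms(2,5) by fastforce
    qed
  qed
  then show ?thesis using c(1) that by blast
qed

lemma dbar_eq_minimum:
  assumes "0 \<le> c" "\<And>c'. 0 \<le> c' \<Longrightarrow> bottleneck (scale_diag c A) B \<le> bottleneck (scale_diag c' A) B"
  shows "dbar A B = bottleneck (scale_diag c A) B"
  unfolding dbar_def using assms by (intro cInf_eq_minimum) auto

theorem mainTheorem8:
  fixes A B :: diagram and am bm :: point and \<Theta> :: "real \<Rightarrow> real" and cA cB :: real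
  assumes "is_diagram A" and "is_diagram B" and "A \<noteq> {#}" and "B \<noteq> {#}"
    and "\<Theta> = (\<lambda>c. bottleneck (scale_diag c A) B)"
    and "bm \<in># chi B" and "\<forall>b\<in>#chi B. snd b \<le> snd bm"
    and "am \<in># chi A" and "\<forall>a\<in>#chi A. snd a \<le> snd am"
    and "cB = min ((snd bm + fst bm) / (2 * bd A)) (persD B / persD A)"
    and "cA = max (2 * bd B / (fst am + snd am)) (persD B / persD A)"
  shows "cB \<le> cA
    \<and> (\<forall>c. 0 \<le> c \<and> c \<le> cB \<longrightarrow> \<Theta> c = persD B)
    \<and> (\<forall>c. c \<ge> cA \<longrightarrow> \<Theta> c = c * persD A)
    \<and> (\<exists>c. cB \<le> c \<and> c \<le> cA \<and> \<Theta> c = dbar A B \<and> (\<forall>c'\<ge>0. \<Theta> c \<le> \<Theta> c'))"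
proof -
  note A = assms(1,3) and B = assms(2,4)
  have pers: "0 < persD A" "0 < persD B" using persD_pos A B by blast+
  have bd: "0 < bd A" "0 < bd B" using bd_pos A B by blast+
  have am: "0 \<le> fst am" "fst am < snd am" and bm: "0 \<le> fst bm" "fst bm < snd bm"
    using assms(1,2) mem_chiD[OF assms(8)] mem_chiD[OF assms(6)] unfolding is_diagram_def by auto
  have cB_pos: "0 < cB" using assms(10) pers bd bm by simp
  have cB_le_cA: "cB \<le> cA" using assms(10,11) by simp
  have low: "\<Theta> c = persD B" if "0 \<le> c" "c \<le> cB" for c
    using that assms(5,10) bd pers persD_le_bottleneck_scale_diag[OF assms(6), of c A]
      bottleneck_scale_diag_le[OF A(1) B(1) A(2) B(2), of c]
    by (simp add: pos_le_divide_eq mult.commute)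
  have high: "\<Theta> c = c * persD A" if "cA \<le> c" for c
  proof -
    have "0 < 2 * bd B / (fst am + snd am)" using bd am by simp
    then have "0 < c" using that assms(11) by linarith
    then show ?thesis
      using that assms(5,11) am pers scaled_persD_le_bottleneck_scale_diag[OF assms(8), of c B]
        bottleneck_scale_diag_le[OF A(1) B(1) A(2) B(2), of c]
      by (simp add: pos_divide_le_eq)
  qed
  have "{cB..cA} \<subseteq> {0<..}" using cB_pos by auto
  then have cont: "continuous_on {cB..cA} \<Theta>"
    using continuous_on_subset[OF continuous_on_bottleneck_scale_diag[OF A, of B]] assms(5) by simp
  have "\<Theta> cB \<le> \<Theta> c" if "0 \<le> c" "c \<le> cB" for c using low that cB_pos by simp
  moreover have "\<Theta> cA \<le> \<Theta> c" if "cA \<le> c" for c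
    using high that cB_le_cA pers by (simp add: mult_right_mono)
  ultimately obtain c where c: "c \<in> {cB..cA}" "\<And>c'. 0 \<le> c' \<Longrightarrow> \<Theta> c \<le> \<Theta> c'"
    using continuous_attains_inf_on_halfline[OF _ cB_le_cA cont] cB_pos by auto
  have "\<Theta> c = dbar A B"
    using dbar_eq_minimum[of c A B] c cB_pos assms(5) by simp
  with c cB_le_cA low high show ?thesis by auto
qed

end
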